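(* Let $r\ge 1$, let $\sigma_1\ge\sigma_2\ge\cdots\ge\sigma_r>0$ be real numbers and $c_1,\ldots,c_r\in\mathbb{C}$, and define the rational function $$\psi(\nu)=\sum_{i=1}^r \frac{|c_i|^2}{(\sigma_i^2+\nu)^2}=\sum_{i=1}^r \frac{|c_i|^2}{(\delta_i-\nu)^2},\qquad \delta_i=-\sigma_i^2,$$ so that $\delta_1\le\cdots\le\delta_r<0$. Assume that the poles of $\psi$ are not all identical, i.e. there exist indices $i,j$ with $c_i\neq 0$, $c_j\neq 0$ and $\delta_i\neq\delta_j$. Let $\nu^{(l)}\ge 0$ and define $$\alpha=\frac{4\big(\psi(\nu^{(l)})\big)^3}{\big(\psi'(\nu^{(l)})\big)^2},\qquad \beta=\nu^{(l)}+\frac{2\psi(\nu^{(l)})}{\psi'(\nu^{(l)})},\qquad F(\nu;\alpha,\beta)=\frac{\alpha}{(\beta-\nu)^2},$$ so that $F(\nu^{(l)};\alpha,\beta)=\psi(\nu^{(l)})$ and $F'(\nu^{(l)};\alpha,\beta)=\psi'(\nu^{(l)})$. Then $F(\nu;\alpha,\beta)<\psi(\nu)$ for all real $\nu>\delta_r$ with $\nu\neq\nu^{(l)}$.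
   Context: $\psi'$ denotes the derivative of $\psi$ with respect to the real variable $\nu$. In the paper, $\nu^{(l)}$ is the current iterate of an iterative root-finding method for $\psi(\nu)=1$ on $[0,\infty)$, hence $\nu^{(l)}\ge 0$. *)

theory Defs
  imports "HOL-Analysis.Analysis"
begin

definition psi :: "nat \<Rightarrow> (nat \<Rightarrow> real) \<Rightarrow> (nat \<Rightarrow> complex) \<Rightarrow> real \<Rightarrow> real" where
  "psi r \<sigma> c \<nu> = (\<Sum>i=1..r. (cmod (c i))\<^sup>2 / ((\<sigma> i)\<^sup>2 + \<nu>)\<^sup>2)"

definition F :: "real \<Rightarrow> real \<Rightarrow> real \<Rightarrow> real" where
  "F \<nu> \<alpha> \<beta> = \<alpha> / (\<beta> - \<nu>)\<^sup>2"

end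

theory Submission
  imports Defs
begin

text \<open>Put \<open>t\<^sub>i = \<sigma>\<^sub>i\<^sup>2 + \<nu>l\<close>, \<open>d = \<nu> - \<nu>l\<close>, weights \<open>w\<^sub>i = |c\<^sub>i|\<^sup>2 / t\<^sub>i\<^sup>2\<close> and \<open>y\<^sub>i = t\<^sub>i / (t\<^sub>i + d)\<close>.
  Then \<open>\<psi>(\<nu>l) = \<Sum> w\<^sub>i\<close>, \<open>\<psi>'(\<nu>l) = -2 \<Sum> w\<^sub>i / t\<^sub>i\<close> and \<open>\<psi>(\<nu>) = \<Sum> w\<^sub>i y\<^sub>i\<^sup>2\<close>, while the model
  evaluates to \<open>F(\<nu>) = (\<Sum> w\<^sub>i)\<^sup>3 / (\<Sum> w\<^sub>i / y\<^sub>i)\<^sup>2\<close>. Hence \<open>F(\<nu>) < \<psi>(\<nu>)\<close> is the inequality between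
  the weighted harmonic and quadratic means of the \<open>y\<^sub>i\<close>. It is strict because two poles with
  nonzero weight differ and \<open>t \<mapsto> t / (t + d)\<close> is injective for \<open>d \<noteq> 0\<close>.\<close>

lemma cube_tangent_identity:
  fixes y l :: real
  assumes "y \<noteq> 0"
  shows "y\<^sup>2 + 2 * l^3 / y - 3 * l\<^sup>2 = (y - l)\<^sup>2 * (y + 2 * l) / y"
  using assms by (simp add: field_simps power2_eq_square power3_eq_cube)

text \<open>With \<open>l\<close> the harmonic mean, the
  difference of the two sides is \<open>\<Sum> w (y\<^sup>2 + 2 l\<^sup>3/y - 3 l\<^sup>2)\<close>, a sum of nonnegative terms.\<close>
lemma weighted_harmonic_mean_less_quadratic_mean:
  fixes w y :: "'a \<Rightarrow> real"
  assumes "finite S"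
    and w_nonneg: "\<And>i. i \<in> S \<Longrightarrow> w i \<ge> 0"
    and y_pos: "\<And>i. i \<in> S \<Longrightarrow> y i > 0"
    and "i \<in> S" "j \<in> S" "w i > 0" "w j > 0" "y i \<noteq> y j"
  shows "(\<Sum>k\<in>S. w k)^3 / (\<Sum>k\<in>S. w k / y k)\<^sup>2 < (\<Sum>k\<in>S. w k * (y k)\<^sup>2)"
proof -
  define W where "W = (\<Sum>k\<in>S. w k)"
  define H where "H = (\<Sum>k\<in>S. w k / y k)"
  define l where "l = W / H"
  have "W > 0"
    unfolding W_def using assms by (intro sum_pos2[of _ i]) auto
  moreover have "H > 0"
    unfolding H_def using assms by (intro sum_pos2[of _ i]) (auto intro: divide_nonneg_pos)
  ultimately have "l > 0"
    by (simp add: l_def)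
  obtain k where k: "k \<in> S" "w k > 0" "y k \<noteq> l"
    using assms by (cases "y i = l") auto
  have term_nonneg: "w m * ((y m)\<^sup>2 + 2 * l^3 / y m - 3 * l\<^sup>2) \<ge> 0" if "m \<in> S" for m
    using w_nonneg[OF that] y_pos[OF that] \<open>l > 0\<close>
    by (simp add: cube_tangent_identity)
  have "0 < (\<Sum>m\<in>S. w m * ((y m)\<^sup>2 + 2 * l^3 / y m - 3 * l\<^sup>2))"
    using k y_pos[OF k(1)] \<open>l > 0\<close> term_nonneg \<open>finite S\<close>
    by (intro sum_pos2[of _ k]) (auto simp: cube_tangent_identity)
  also have "\<dots> = (\<Sum>m\<in>S. w m * (y m)\<^sup>2) + 2 * l^3 * H - 3 * l\<^sup>2 * W"
    by (simp add: H_def W_def algebra_simps sum.distrib sum_subtractf sum_distrib_left sum_distrib_right)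
  also have "\<dots> = (\<Sum>m\<in>S. w m * (y m)\<^sup>2) - W^3 / H\<^sup>2"
    using \<open>H > 0\<close> by (simp add: l_def field_simps power2_eq_square power3_eq_cube)
  finally show ?thesis
    by (simp add: W_def H_def)
qed

lemma F_tangent_model:
  fixes A B \<nu>l \<nu> :: real
  assumes "B \<noteq> 0"
  shows "F \<nu> (A^3 / B\<^sup>2) (\<nu>l - A / B) = A^3 / (A + B * (\<nu> - \<nu>l))\<^sup>2"
proof -
  have "\<nu>l - A / B - \<nu> = - (A + B * (\<nu> - \<nu>l)) / B"
    using assms by (simp add: field_simps)
  then show ?thesis
    using assms by (simp add: F_def field_simps power2_eq_square power3_eq_cube)
qed

lemma psi_has_real_derivative:
  assumes "\<And>i. i \<in> {1..r} \<Longrightarrow> (\<sigma> i)\<^sup>2 + x \<noteq> 0"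
  shows "(psi r \<sigma> c has_real_derivative
           -2 * (\<Sum>i=1..r. (cmod (c i))\<^sup>2 / ((\<sigma> i)\<^sup>2 + x)^3)) (at x)"
proof -
  have inverse_square: "((\<lambda>v. k / (s + v)\<^sup>2) has_real_derivative -2 * (k / (s + x)^3)) (at x)"
    if "s + x \<noteq> 0" for k s :: real
    using that by (auto intro!: derivative_eq_intros simp: divide_simps power2_eq_square power3_eq_cube)
  show ?thesis
    unfolding psi_def [abs_def] sum_distrib_left using assms
    by (intro DERIV_sum inverse_square) blast
qed

lemma inverse_square_tangent_model_less:
  fixes a t :: "'a \<Rightarrow> real" and d :: real
  assumes "finite S"
    and "\<And>k. k \<in> S \<Longrightarrow> a k \<ge> 0"
    and t_pos: "\<And>k. k \<in> S \<Longrightarrow> t k > 0"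
    and shifted_pos: "\<And>k. k \<in> S \<Longrightarrow> t k + d > 0"
    and "d \<noteq> 0"
    and ij: "i \<in> S" "j \<in> S" "a i > 0" "a j > 0" "t i \<noteq> t j"
  shows "(\<Sum>k\<in>S. a k / (t k)\<^sup>2)^3 / ((\<Sum>k\<in>S. a k / (t k)\<^sup>2) + (\<Sum>k\<in>S. a k / (t k)^3) * d)\<^sup>2
           < (\<Sum>k\<in>S. a k / (t k + d)\<^sup>2)"
proof -
  define w where "w k = a k / (t k)\<^sup>2" for k
  have "w i > 0" "w j > 0"
    using ij t_pos[OF ij(1)] t_pos[OF ij(2)] by (simp_all add: w_def)
  define y where "y k = t k / (t k + d)" for k
  have "y i \<noteq> y j"
  proof
    assume "y i = y j"
    then have "(t i - t j) * d = 0"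
      using ij shifted_pos[of i] shifted_pos[of j] by (simp add: y_def field_simps)
    with ij \<open>d \<noteq> 0\<close> show False
      by simp
  qed
  then have "(\<Sum>k\<in>S. w k)^3 / (\<Sum>k\<in>S. w k / y k)\<^sup>2 < (\<Sum>k\<in>S. w k * (y k)\<^sup>2)"
    using assms \<open>w i > 0\<close> \<open>w j > 0\<close>
    by (intro weighted_harmonic_mean_less_quadratic_mean) (auto simp: w_def y_def)
  moreover have term_eqs: "w k / y k = w k + a k / (t k)^3 * d" "w k * (y k)\<^sup>2 = a k / (t k + d)\<^sup>2"
    if "k \<in> S" for k
    using t_pos[OF that] shifted_pos[OF that]
    by (simp_all add: w_def y_def field_simps power2_eq_square power3_eq_cube)
  ultimately show ?thesis
    by (simp add: w_def sum.distrib sum_distrib_right cong: sum.cong_simp)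
qed

theorem theorem1:
  fixes r :: nat and \<sigma> :: "nat \<Rightarrow> real" and c :: "nat \<Rightarrow> complex"
    and \<nu>l \<nu> :: real
  assumes r: "r \<ge> 1"
    and mono: "\<And>i j. 1 \<le> i \<Longrightarrow> i \<le> j \<Longrightarrow> j \<le> r \<Longrightarrow> \<sigma> j \<le> \<sigma> i"
    and pos: "\<sigma> r > 0"
    and distinct: "\<exists>i\<in>{1..r}. \<exists>j\<in>{1..r}. c i \<noteq> 0 \<and> c j \<noteq> 0 \<and> - (\<sigma> i)\<^sup>2 \<noteq> - (\<sigma> j)\<^sup>2"
    and nul: "\<nu>l \<ge> 0"
    and \<nu>: "\<nu> > - (\<sigma> r)\<^sup>2" "\<nu> \<noteq> \<nu>l"
  shows "let \<alpha> = 4 * (psi r \<sigma> c \<nu>l)^3 / (deriv (psi r \<sigma> c) \<nu>l)\<^sup>2;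
             \<beta> = \<nu>l + 2 * psi r \<sigma> c \<nu>l / deriv (psi r \<sigma> c) \<nu>l
         in F \<nu> \<alpha> \<beta> < psi r \<sigma> c \<nu>"
proof -
  define t where "t i = (\<sigma> i)\<^sup>2 + \<nu>l" for i
  have t_pos: "t i > 0" and shifted_pos: "t i + (\<nu> - \<nu>l) > 0" if "i \<in> {1..r}" for i
  proof -
    have "(\<sigma> r)\<^sup>2 \<le> (\<sigma> i)\<^sup>2"
      using mono[of i r] pos that by (auto intro: power_mono)
    moreover have "(\<sigma> r)\<^sup>2 > 0"
      using pos by simp
    ultimately show "t i > 0" "t i + (\<nu> - \<nu>l) > 0"
      using nul \<nu>(1) unfolding t_def by linarith+
  qed
  define B where "B = (\<Sum>i=1..r. (cmod (c i))\<^sup>2 / (t i)^3)"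
  have "deriv (psi r \<sigma> c) \<nu>l = -2 * B"
    unfolding B_def t_def using t_pos
    by (intro DERIV_imp_deriv psi_has_real_derivative) (fastforce simp: t_def)
  moreover obtain i j where ij: "i \<in> {1..r}" "j \<in> {1..r}" "c i \<noteq> 0" "c j \<noteq> 0" "t i \<noteq> t j"
    using distinct by (auto simp: t_def)
  moreover have "B > 0"
    unfolding B_def using ij t_pos by (intro sum_pos2[of _ i]) (auto intro: divide_nonneg_pos)
  ultimately show ?thesis
    using inverse_square_tangent_model_less[of "{1..r}" "\<lambda>i. (cmod (c i))\<^sup>2" t "\<nu> - \<nu>l"]
      t_pos shifted_pos \<nu>(2)
    by (simp add: Let_def psi_def t_def B_def F_tangent_model algebra_simps)
qed

end
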